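(* For every prime $p$: (i) $\{(r,e,d)\in\mathscr{U}(p)\mid p\mid r,\ \det M_d((x^r-x-1)^e)\ne0\}=\{(r,e,d)\in\mathscr{B}(p)\mid p\mid r\}$; (ii) $\{(r,e,d)\in\mathscr{U}(p)\mid p<r,\ p\nmid r,\ \det M_d((x^r-1)^e)\ne0\}=\{(r,e,d)\in\mathscr{B}(p)\mid p<r,\ p\nmid r\}$; (iii) $\{(r,e,d)\in\mathscr{U}(p)\mid 2\le r\le p-1,\ r\nmid p-1,\ \det M_d((x^r-1)^e)\ne0\}=\{(r,e,d)\in\mathscr{B}(p)\mid 2\le r\le p-1,\ r\nmid p-1\}$.
   Context: Let $p$ be a prime. For a polynomial $h(x)\in\mathbb{F}_p[x]$ and integers $e\ge0$, $0\le d\le p$, write $h(x)^e=\sum_{i\ge0}c_ix^i$ ($c_i=0$ for $i<0$) and let $M_d(h(x)^e)$ be the $d\times d$ matrix with $(i,j)$ entry $c_{ip+j-d-1}$; in particular $M_d((x^r-1)^e)$, $M_d((x^r-x-1)^e)$ are these matrices for $h=x^r-1$, $h=x^r-x-1$. For integer triples put $g=\left\{red-\frac{d(d+1)}{2}(p-1)\right\}\big/\frac{r(r-1)}{2}\in\mathbb{Q}$. $\mathscr{U}(p)$ is the set of integer triples $(r,e,d)$ with $r\ge2$, $e\ge1$, $1\le d\le p$, $d(p-1)\le re\le r(p-1)$, $g>0$, and $g\in2\mathbb{Z}$ if $p\ne2$, $g\in\mathbb{Z}$ if $p=2$. $\mathscr{B}(p)=\mathscr{B}_+(p)\cup\mathscr{B}_0(p)\cup\mathscr{B}_-(p)$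 where $\mathscr{B}_+(p)=\{(r,e,d): 2\le r\le p,\ e=p-1,\ d=r\}$, $\mathscr{B}_0(p)=\{(r,e,d): 2\le r\le p+1,\ (p-1)/2<e\le p-1,\ r(p-1-e)\le p-1,\ d=r-1\}$, $\mathscr{B}_-(p)=\{(r,e,d): r\ge2,\ (p-1)/2<e\le p-1,\ r(p-1-e)=p-1,\ d=r-2\}$ (integer triples). *)

theory Defs
  imports "Berlekamp_Zassenhaus.Finite_Field" "Jordan_Normal_Form.Determinant"
begin

definition cpow :: "'a::comm_ring_1 poly \<Rightarrow> nat \<Rightarrow> int \<Rightarrow> 'a" where
  "cpow h e k = (if k < 0 then 0 else coeff (h ^ e) (nat k))"

text \<open>M_d(h^e) for the prime p: entry (i,j), 1 <= i,j <= d, is c_{ip+j-d-1}.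
  Jordan_Normal_Form matrices are 0-indexed, so entry (i,j) with i,j < d
  is c_{(i+1)p+(j+1)-d-1}.\<close>
definition Mmat :: "'a::comm_ring_1 poly \<Rightarrow> nat \<Rightarrow> int \<Rightarrow> nat \<Rightarrow> 'a mat" where
  "Mmat h e p d = mat d d (\<lambda>(i,j). cpow h e ((int i + 1) * p + (int j + 1) - int d - 1))"

definition hA :: "nat \<Rightarrow> 'a::comm_ring_1 poly" where
  "hA r = monom 1 r - 1"
definition hB :: "nat \<Rightarrow> 'a::comm_ring_1 poly" where
  "hB r = monom 1 r - monom 1 1 - 1"

definition gval :: "int \<Rightarrow> int \<Rightarrow> int \<Rightarrow> int \<Rightarrow> rat" where
  "gval p r e d = (of_int (r*e*d) - of_int (d*(d+1)) / 2 * of_int (p-1)) / (of_int (r*(r-1)) / 2)"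

definition Uset :: "int \<Rightarrow> (int \<times> int \<times> int) set" where
  "Uset p = {(r,e,d). r \<ge> 2 \<and> e \<ge> 1 \<and> 1 \<le> d \<and> d \<le> p \<and> d*(p-1) \<le> r*e \<and> r*e \<le> r*(p-1)
     \<and> gval p r e d > 0
     \<and> (if p \<noteq> 2 then (\<exists>k::int. gval p r e d = of_int (2*k)) else (\<exists>k::int. gval p r e d = of_int k))}"

definition Bplus :: "int \<Rightarrow> (int \<times> int \<times> int) set" where
  "Bplus p = {(r,e,d). 2 \<le> r \<and> r \<le> p \<and> e = p - 1 \<and> d = r}"
definition Bzero :: "int \<Rightarrow> (int \<times> int \<times> int) set" where
  "Bzero p = {(r,e,d). 2 \<le> r \<and> r \<le> p + 1 \<and> (of_int (p-1) :: rat) / 2 < of_int e \<and> e \<le> p - 1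
      \<and> r*(p-1-e) \<le> p - 1 \<and> d = r - 1}"
definition Bminus :: "int \<Rightarrow> (int \<times> int \<times> int) set" where
  "Bminus p = {(r,e,d). 2 \<le> r \<and> (of_int (p-1) :: rat) / 2 < of_int e \<and> e \<le> p - 1
      \<and> r*(p-1-e) = p - 1 \<and> d = r - 2}"
definition Bset :: "int \<Rightarrow> (int \<times> int \<times> int) set" where
  "Bset p = Bplus p \<union> Bzero p \<union> Bminus p"

end

theory Submission
  imports Defs
begin

(* For e < p the binomial coefficients (e choose k) are units in F_p, so the support of h^e is
   explicit: the multiples of r up to r e for h = x^r - 1, and the numbers q r + m with q + m <= e
   for h = x^r - x - 1 when e < r. This determines the zero pattern of M_d(h^e).

   Nonsingular cases: for x^r - 1 with r coprime to p and d in {r - 1, r}, row i has its only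
   nonzero entry in the column congruent to d - (i + 1) p modulo r, and these columns are
   distinct; for x^p - x - 1 with e = p - 1 the matrix is anti-triangular.

   Singular cases: otherwise some row of M_d vanishes, which follows from the arithmetic
   constraints defining U(p), and for r <= p - 1, r not dividing p - 1, d <= r - 2 from a
   counting argument on the residues of i p modulo r.

   Finally B+(p) and B0(p) are exactly the triples of U(p) with d = r and d = r - 1, while
   B-(p) does not meet any of the three ranges of r. *)

section \<open>Coefficients of powers of \<open>x\<^sup>r - 1\<close> and \<open>x\<^sup>r - x - 1\<close>\<close>

lemma hA_power:
  "(hA r :: 'a::comm_ring_1 poly) ^ e = (\<Sum>k\<le>e. monom (of_nat (e choose k) * (-1) ^ (e - k)) (r * k))"
proof -
  have hA_eq: "(hA r :: 'a poly) = monom 1 r + [:-1:]"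
    by (simp add: hA_def one_pCons)
  show ?thesis
    unfolding hA_eq binomial_ring
  proof (intro sum.cong refl)
    fix k
    have monom_pow: "monom (1::'a) r ^ k = monom 1 (r * k)"
      by (simp add: monom_power mult.commute)
    have minus_pow: "[:-1:] ^ (e - k) = [:(-1) ^ (e - k) :: 'a:]"
      by (simp add: poly_const_pow)
    have of_nat_const: "(of_nat (e choose k) :: 'a poly) = [:of_nat (e choose k):]"
      by (simp add: of_nat_poly)
    have const_mult: "[:x:] * monom 1 n * [:y:] = monom (x * y) n" for x y :: 'a and n
      by (simp add: smult_monom mult.commute)
    show "(of_nat (e choose k) :: 'a poly) * monom 1 r ^ k * [:-1:] ^ (e - k) =
        monom (of_nat (e choose k) * (-1) ^ (e - k)) (r * k)"
      by (simp only: monom_pow minus_pow of_nat_const const_mult)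
  qed
qed

lemma coeff_hA_power:
  assumes "0 < r"
  shows "coeff ((hA r :: 'a::comm_ring_1 poly) ^ e) n =
    (if r dvd n \<and> n div r \<le> e then of_nat (e choose (n div r)) * (-1) ^ (e - n div r) else 0)"
proof -
  have "coeff ((hA r :: 'a poly) ^ e) n =
      (\<Sum>k\<le>e. if k = n div r \<and> r dvd n then of_nat (e choose k) * (-1) ^ (e - k) else 0)"
    unfolding hA_power coeff_sum coeff_monom
    by (intro sum.cong refl) (use assms in auto)
  then show ?thesis
    by (cases "r dvd n") (auto simp: sum.delta)
qed

lemma hB_power:
  "(hB r :: 'a::comm_ring_1 poly) ^ e =
     (\<Sum>k\<le>e. smult (of_nat (e choose k) * (-1) ^ (e - k)) (monom 1 (r * k) * [:1, 1:] ^ (e - k)))"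
proof -
  have hB_eq: "(hB r :: 'a poly) = monom 1 r + - [:1, 1:]"
    by (simp add: hB_def monom_Suc one_pCons)
  have minus_one_power: "(-1 :: 'a poly) ^ m = [:(-1) ^ m:]" for m
    by (induction m) auto
  show ?thesis
    unfolding hB_eq binomial_ring
  proof (intro sum.cong refl)
    fix k
    have monom_pow: "monom (1::'a) r ^ k = monom 1 (r * k)"
      by (simp add: monom_power mult.commute)
    have minus_pow: "(- [:1, 1:] :: 'a poly) ^ (e - k) = smult ((-1) ^ (e - k)) ([:1, 1:] ^ (e - k))"
      by (subst power_minus) (simp add: minus_one_power)
    have of_nat_const: "(of_nat (e choose k) :: 'a poly) = [:of_nat (e choose k):]"
      by (simp add: of_nat_poly)
    have const_mult: "[:x:] * M * smult y Q = smult (x * y) (M * Q)" for x y :: 'a and M Q :: "'a poly"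
      by (simp add: mult_smult_right mult_smult_left smult_smult mult.commute)
    show "(of_nat (e choose k) :: 'a poly) * monom 1 r ^ k * (- [:1, 1:]) ^ (e - k) =
        smult (of_nat (e choose k) * (-1) ^ (e - k)) (monom 1 (r * k) * [:1, 1:] ^ (e - k))"
      by (simp only: monom_pow minus_pow of_nat_const const_mult)
  qed
qed

lemma coeff_one_plus_x_power: "coeff ([:1, 1:] ^ m :: 'a::comm_ring_1 poly) t = of_nat (m choose t)"
proof (cases "t \<le> m")
  case True
  then show ?thesis
    by (simp add: coeff_linear_poly_power)
next
  case False
  have "degree ([:1, 1:] ^ m :: 'a poly) \<le> m"
    by (rule order.trans[OF degree_power_le]) simp
  then show ?thesis
    using False by (simp add: coeff_eq_0 binomial_eq_0)
qed

text \<open>For \<open>e < r\<close> the factor \<open>(x + 1) ^ (e - k)\<close> has degree below \<open>r\<close>, so only the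
  summand \<open>k = n div r\<close> of \<open>hB_power\<close> reaches the coefficient of \<open>x ^ n\<close>.\<close>
lemma coeff_hB_power:
  assumes "e < r"
  shows "coeff ((hB r :: 'a::comm_ring_1 poly) ^ e) n =
    (if n div r \<le> e
     then of_nat (e choose (n div r)) * (-1) ^ (e - n div r) * of_nat ((e - n div r) choose (n mod r))
     else 0)"
proof -
  have "coeff ((hB r :: 'a poly) ^ e) n =
      (\<Sum>k\<le>e. if k = n div r then of_nat (e choose k) * (-1) ^ (e - k) * of_nat ((e - k) choose (n mod r)) else 0)"
    unfolding hB_power coeff_sum coeff_smult coeff_monom_mult coeff_one_plus_x_power
  proof (intro sum.cong refl)
    fix k
    show "of_nat (e choose k) * (-1) ^ (e - k) * (if r * k \<le> n then 1 * of_nat (e - k choose (n - r * k)) else 0) =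
        (if k = n div r then of_nat (e choose k) * (-1) ^ (e - k) * of_nat (e - k choose (n mod r)) else (0::'a))"
    proof (cases "k = n div r")
      case True
      then show ?thesis
        by (simp add: minus_mod_eq_mult_div [symmetric] mult.commute)
    next
      case False
      show ?thesis
      proof (cases "r * k \<le> n")
        case True
        with False have "k < n div r"
          using assms by (metis div_le_mono le_neq_implies_less mult.commute nonzero_mult_div_cancel_left
              not_less0 order_less_trans zero_less_iff_neq_zero)
        then have "r * (k + 1) \<le> n"
          using assms by (metis Suc_eq_plus1 Suc_leI div_le_mono2 less_mult_imp_div_less linorder_not_le
              mult.commute zero_less_iff_neq_zero)
        then have "e - k < n - r * k"
          using assms by (simp add: algebra_simps)
        then show ?thesis
          using False True by (simp add: binomial_eq_0)
      qed (use False in simp)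
    qed
  qed
  then show ?thesis
    by (auto simp: sum.delta)
qed

lemma of_nat_choose_mod_ring_neq_0:
  assumes "k \<le> e" and "e < CARD('p::prime_card)"
  shows "(of_nat (e choose k) :: 'p mod_ring) \<noteq> 0"
proof
  assume "(of_nat (e choose k) :: 'p mod_ring) = 0"
  then have "CARD('p) dvd e choose k"
    by (simp add: of_nat_eq_0_iff_char_dvd)
  then have "CARD('p) dvd fact e"
    using binomial_fact_lemma[OF assms(1)] by (metis dvd_mult_left dvd_trans dvd_triv_right mult.commute)
  then show False
    using assms prime_dvd_fact_iff[OF prime_card[where 'a='p]] by simp
qed

lemma cpow_hA_neq_0_iff:
  assumes "1 \<le> r" and "0 \<le> e" and "e < int CARD('p::prime_card)"
  shows "(cpow (hA (nat r)) (nat e) k :: 'p mod_ring) \<noteq> 0 \<longleftrightarrow> 0 \<le> k \<and> r dvd k \<and> k div r \<le> e"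
proof (cases "k < 0")
  case False
  obtain R E n where RE: "r = int R" "e = int E" "k = int n"
    using assms False by (metis nonneg_int_cases not_less order_trans zero_le_one)
  with assms have "0 < R" "E < CARD('p)"
    by auto
  with RE show ?thesis
    by (auto simp: cpow_def coeff_hA_power of_nat_choose_mod_ring_neq_0 simp flip: zdiv_int)
qed (simp add: cpow_def)

lemma cpow_hB_neq_0_iff:
  assumes "0 \<le> e" and "e < r" and "e < int CARD('p::prime_card)"
  shows "(cpow (hB (nat r)) (nat e) k :: 'p mod_ring) \<noteq> 0 \<longleftrightarrow> 0 \<le> k \<and> k div r + k mod r \<le> e"
proof (cases "k < 0")
  case False
  obtain R E n where RE: "r = int R" "e = int E" "k = int n"
    using assms False by (metis nonneg_int_cases not_less order_trans less_imp_le)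
  with assms have "E < R" "E < CARD('p)"
    by auto
  with RE show ?thesis
    by (cases "n mod R \<le> E - n div R")
      (auto simp: cpow_def coeff_hB_power of_nat_choose_mod_ring_neq_0 binomial_eq_0
        simp flip: zdiv_int zmod_int)
qed (simp add: cpow_def)

section \<open>Determinants with a prescribed pattern of zeros\<close>

lemma det_eq_0_if_zero_row:
  fixes A :: "'a::comm_ring_1 mat"
  assumes A: "A \<in> carrier_mat n n" and k: "k < n" and zero: "\<And>j. j < n \<Longrightarrow> A $$ (k, j) = 0"
  shows "det A = 0"
  unfolding det_def'[OF A]
proof (rule sum.neutral, intro ballI)
  fix \<sigma> assume "\<sigma> \<in> {\<sigma>. \<sigma> permutes {0..<n}}"
  then have "\<sigma> k < n"
    using permutes_in_image k by fastforce
  then have "(\<Prod>i = 0..<n. A $$ (i, \<sigma> i)) = 0"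
    using k zero by (intro prod_zero) (auto intro!: bexI[of _ k])
  then show "signof \<sigma> * (\<Prod>i = 0..<n. A $$ (i, \<sigma> i)) = 0"
    by simp
qed

lemma det_neq_0_if_permuted_lower_triangular:
  fixes A :: "'a::idom mat"
  assumes A: "A \<in> carrier_mat n n" and \<sigma>: "\<sigma> permutes {0..<n}"
    and upper: "\<And>i j. i < j \<Longrightarrow> j < n \<Longrightarrow> A $$ (\<sigma> i, j) = 0"
    and diag: "\<And>i. i < n \<Longrightarrow> A $$ (\<sigma> i, i) \<noteq> 0"
  shows "det A \<noteq> 0"
proof -
  let ?B = "mat n n (\<lambda>(i, j). A $$ (\<sigma> i, j))"
  have "signof \<sigma> * det A = det ?B"
    by (rule det_permute_rows[OF A \<sigma>, symmetric])
  also have "\<dots> = prod_list (diag_mat ?B)"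
    by (rule det_lower_triangular[of n]) (auto simp: upper)
  also have "\<dots> \<noteq> 0"
    using diag by (auto simp: diag_mat_def prod_list_zero_iff)
  finally show ?thesis
    by auto
qed

lemma det_neq_0_if_antitriangular:
  fixes A :: "'a::idom mat"
  assumes A: "A \<in> carrier_mat n n"
    and below: "\<And>i j. i < n \<Longrightarrow> j < n \<Longrightarrow> n \<le> i + j \<Longrightarrow> A $$ (i, j) = 0"
    and antidiag: "\<And>i. i < n \<Longrightarrow> A $$ (i, n - 1 - i) \<noteq> 0"
  shows "det A \<noteq> 0"
proof (rule det_neq_0_if_permuted_lower_triangular[OF A])
  show "(\<lambda>i. if i < n then n - 1 - i else i) permutes {0..<n}"
    by (rule inj_imp_permutes) (auto simp: inj_on_def)
next
  fix i j assume "i < j" "j < n"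
  then show "A $$ (if i < n then n - 1 - i else i, j) = 0"
    by (intro below) auto
next
  fix i assume "i < n"
  then show "A $$ (if i < n then n - 1 - i else i, i) \<noteq> 0"
    using antidiag[of "n - 1 - i"] by simp
qed

lemma det_neq_0_if_monomial:
  fixes A :: "'a::idom mat"
  assumes A: "A \<in> carrier_mat n n"
    and s: "\<And>i. i < n \<Longrightarrow> s i < n" "inj_on s {0..<n}"
    and off: "\<And>i j. i < n \<Longrightarrow> j < n \<Longrightarrow> j \<noteq> s i \<Longrightarrow> A $$ (i, j) = 0"
    and on: "\<And>i. i < n \<Longrightarrow> A $$ (i, s i) \<noteq> 0"
  shows "det A \<noteq> 0"
proof -
  define \<tau> where "\<tau> i = (if i < n then s i else i)" for i
  have \<tau>: "\<tau> permutes {0..<n}"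
    by (rule inj_imp_permutes) (use s in \<open>auto simp: \<tau>_def inj_on_def\<close>)
  have inv_\<tau>: "inv_into UNIV \<tau> i < n" "s (inv_into UNIV \<tau> i) = i" if "i < n" for i
  proof -
    show "inv_into UNIV \<tau> i < n"
      using permutes_in_image[OF permutes_inv[OF \<tau>]] that by simp
    then show "s (inv_into UNIV \<tau> i) = i"
      using permutes_inverses(1)[OF \<tau>, of i] by (simp add: \<tau>_def)
  qed
  show ?thesis
  proof (rule det_neq_0_if_permuted_lower_triangular[OF A permutes_inv[OF \<tau>]])
    fix i j assume "i < j" "j < n"
    then show "A $$ (inv_into UNIV \<tau> i, j) = 0"
      using inv_\<tau> by (intro off) auto
  next
    fix i assume "i < n"
    then show "A $$ (inv_into UNIV \<tau> i, i) \<noteq> 0"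
      using inv_\<tau> on by metis
  qed
qed

lemma Mmat_carrier: "Mmat h e p d \<in> carrier_mat d d"
  by (simp add: Mmat_def)

lemma Mmat_index:
  "i < d \<Longrightarrow> j < d \<Longrightarrow> Mmat h e p d $$ (i, j) = cpow h e ((int i + 1) * p + int j - int d)"
  by (simp add: Mmat_def algebra_simps)

lemma det_Mmat_neq_0_imp_row:
  assumes "det (Mmat h e p d) \<noteq> 0" and "i < d"
  obtains j where "j < d" and "cpow h e ((int i + 1) * p + int j - int d) \<noteq> 0"
proof -
  have "\<exists>j<d. cpow h e ((int i + 1) * p + int j - int d) \<noteq> 0"
  proof (rule ccontr)
    assume "\<not> ?thesis"
    then have "Mmat h e p d $$ (i, j) = 0" if "j < d" for j
      using \<open>i < d\<close> that by (simp add: Mmat_index)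
    then have "det (Mmat h e p d) = 0"
      by (rule det_eq_0_if_zero_row[OF Mmat_carrier \<open>i < d\<close>])
    with assms show False
      by simp
  qed
  with that show thesis
    by blast
qed

section \<open>The sets \<open>U(p)\<close> and \<open>B(p)\<close>\<close>

lemma gval_eq_of_int_iff:
  assumes "2 \<le> r"
  shows "gval p r e d = of_int g \<longleftrightarrow> 2 * r * e * d - d * (d + 1) * (p - 1) = g * (r * (r - 1))"
proof -
  have nz: "(of_int (r * (r - 1)) :: rat) \<noteq> 0"
    using assms by simp
  then have "gval p r e d = of_int (2 * r * e * d - d * (d + 1) * (p - 1)) / of_int (r * (r - 1))"
    by (simp add: gval_def field_simps)
  also have "\<dots> = of_int g \<longleftrightarrow> (of_int (2 * r * e * d - d * (d + 1) * (p - 1)) :: rat) = of_int g * of_int (r * (r - 1))"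
    by (rule nonzero_divide_eq_eq[OF nz])
  also have "\<dots> \<longleftrightarrow> 2 * r * e * d - d * (d + 1) * (p - 1) = g * (r * (r - 1))"
    by (simp only: of_int_mult[symmetric] of_int_eq_iff)
  finally show ?thesis .
qed

text \<open>The witness \<open>g\<close> is the number \<open>g = gval p r e d\<close> of the paper.\<close>
lemma mem_Uset_iff:
  "(r, e, d) \<in> Uset p \<longleftrightarrow> 2 \<le> r \<and> 1 \<le> e \<and> 1 \<le> d \<and> d \<le> p \<and> d * (p - 1) \<le> r * e \<and> r * e \<le> r * (p - 1)
     \<and> (\<exists>g. 2 * r * e * d - d * (d + 1) * (p - 1) = g * (r * (r - 1)) \<and> 0 < g \<and> (p \<noteq> 2 \<longrightarrow> even g))"
proof (cases "2 \<le> r")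
  case True
  have even_witness: "(\<exists>g. x = of_int g \<and> 0 < g \<and> even g) \<longleftrightarrow> 0 < x \<and> (\<exists>k. x = of_int (2 * k))"
    for x :: rat
    by (metis dvd_triv_left evenE of_int_pos of_int_0_less_iff)
  have witness: "(\<exists>g. x = of_int g \<and> 0 < g) \<longleftrightarrow> 0 < x \<and> (\<exists>k. x = of_int k)" for x :: rat
    by auto
  have "(\<exists>g. 2 * r * e * d - d * (d + 1) * (p - 1) = g * (r * (r - 1)) \<and> 0 < g \<and> (p \<noteq> 2 \<longrightarrow> even g))
      \<longleftrightarrow> (\<exists>g. gval p r e d = of_int g \<and> 0 < g \<and> (p \<noteq> 2 \<longrightarrow> even g))"
    by (simp add: gval_eq_of_int_iff[OF True])
  also have "\<dots> \<longleftrightarrow> 0 < gval p r e d \<and>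
      (if p \<noteq> 2 then \<exists>k. gval p r e d = of_int (2 * k) else \<exists>k. gval p r e d = of_int k)"
    using even_witness[of "gval p r e d"] witness[of "gval p r e d"] by (cases "p = 2") simp_all
  finally show ?thesis
    by (simp add: Uset_def)
qed (simp add: Uset_def)

lemma Uset_bounds:
  assumes "(r, e, d) \<in> Uset p" and "2 \<le> p"
  shows "e \<le> p - 1" and "d \<le> r" and "d * p \<le> r * (e + 1)"
proof -
  from assms(1) have r: "2 \<le> r" and le: "d * (p - 1) \<le> r * e" "r * e \<le> r * (p - 1)"
    by (auto simp: mem_Uset_iff)
  then show "e \<le> p - 1"
    by simp
  from le have "d * (p - 1) \<le> r * (p - 1)"
    by simp
  with assms(2) show "d \<le> r"
    by simp
  with le show "d * p \<le> r * (e + 1)"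
    by (simp add: algebra_simps)
qed

lemma prime_odd_if_neq_2:
  assumes "prime (p::int)" and "p \<noteq> 2"
  shows "odd p"
proof -
  have "2 < p"
    using prime_ge_2_int[OF assms(1)] assms(2) by linarith
  then show ?thesis
    by (rule prime_odd_int[OF assms(1)])
qed

lemma eq_if_dvd_less_double:
  fixes p r :: int
  assumes "p dvd r" and "0 < r" and "r < 2 * p"
  shows "r = p"
proof -
  obtain m where m: "r = p * m"
    using assms(1) by (rule dvdE)
  with assms have "0 < p * m" "p * m < p * 2" "0 < p"
    by (auto simp: mult.commute)
  then have "0 < m" "m < 2"
    by (simp_all add: zero_less_mult_iff)
  with m show ?thesis
    by simp
qed

lemma eq_0_if_mult_le_less:
  fixes r x c :: int
  assumes "0 \<le> x" and "0 \<le> c" and "r * x \<le> c" and "c < r"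
  shows "x = 0"
proof (rule ccontr)
  assume "x \<noteq> 0"
  with assms have "r * 1 \<le> r * x"
    by (intro mult_left_mono) auto
  with assms show False
    by simp
qed

lemma mem_Bplus_iff:
  assumes "prime p"
  shows "(r, e, d) \<in> Bplus p \<longleftrightarrow> (r, e, d) \<in> Uset p \<and> d = r"
proof
  assume "(r, e, d) \<in> Bplus p"
  then have B: "2 \<le> r" "r \<le> p" "e = p - 1" "d = r"
    by (auto simp: Bplus_def)
  have "2 * r * e * d - d * (d + 1) * (p - 1) = (p - 1) * (r * (r - 1))"
    unfolding B(3,4) by (simp add: algebra_simps)
  moreover have "0 < p - 1" "p \<noteq> 2 \<longrightarrow> even (p - 1)"
    using prime_ge_2_int[OF assms] prime_odd_if_neq_2[OF assms] by simp_all
  ultimately show "(r, e, d) \<in> Uset p \<and> d = r"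
    using B unfolding mem_Uset_iff by (intro conjI exI[of _ "p - 1"]) auto
next
  assume U: "(r, e, d) \<in> Uset p \<and> d = r"
  then have d: "d = r"
    by simp
  from U have "2 \<le> r" "d \<le> p" "d * (p - 1) \<le> r * e" "r * e \<le> r * (p - 1)"
    by (auto simp: mem_Uset_iff)
  then have "e = p - 1"
    unfolding d by (simp add: mult.commute[of r])
  with \<open>2 \<le> r\<close> \<open>d \<le> p\<close> d show "(r, e, d) \<in> Bplus p"
    by (simp add: Bplus_def)
qed

lemma mem_Bzero_iff:
  assumes "prime p"
  shows "(r, e, d) \<in> Bzero p \<longleftrightarrow> (r, e, d) \<in> Uset p \<and> d = r - 1"
proof
  assume "(r, e, d) \<in> Bzero p"
  then have B: "2 \<le> r" "r \<le> p + 1" "p - 1 < 2 * e" "e \<le> p - 1" "r * (p - 1 - e) \<le> p - 1" "d = r - 1"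
    by (auto simp: Bzero_def)
  have "2 * r * e * d - d * (d + 1) * (p - 1) = (2 * e - p + 1) * (r * (r - 1))"
    unfolding B(6) by (simp add: algebra_simps)
  moreover have "p \<noteq> 2 \<longrightarrow> even (2 * e - p + 1)"
    using prime_odd_if_neq_2[OF assms] by simp
  moreover have "d * (p - 1) \<le> r * e"
    using B(5) unfolding B(6) by (simp add: algebra_simps)
  moreover have "r * e \<le> r * (p - 1)"
    using B by simp
  moreover have "1 \<le> p - 1"
    using prime_ge_2_int[OF assms] by simp
  ultimately show "(r, e, d) \<in> Uset p \<and> d = r - 1"
    using B unfolding mem_Uset_iff by (intro conjI exI[of _ "2 * e - p + 1"]) auto
next
  assume U: "(r, e, d) \<in> Uset p \<and> d = r - 1"
  then have d: "d = r - 1"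
    by simp
  from U obtain g where r: "2 \<le> r" "d \<le> p" and le: "d * (p - 1) \<le> r * e" "r * e \<le> r * (p - 1)"
    and g: "2 * r * e * d - d * (d + 1) * (p - 1) = g * (r * (r - 1))" "0 < g"
    by (auto simp: mem_Uset_iff)
  have "2 * r * e * d - d * (d + 1) * (p - 1) = (2 * e - p + 1) * (r * (r - 1))"
    unfolding d by (simp add: algebra_simps)
  with g r have "p - 1 < 2 * e"
    by simp
  moreover have "r * (p - 1 - e) \<le> p - 1"
    using le(1) unfolding d by (simp add: algebra_simps)
  ultimately show "(r, e, d) \<in> Bzero p"
    using r le(2) d by (simp add: Bzero_def)
qed

lemma Bset_dvd_iff:
  fixes p r e d :: int
  assumes "prime p"
  shows "(r, e, d) \<in> Bset p \<and> p dvd r \<longleftrightarrow> r = p \<and> e = p - 1 \<and> (d = p \<or> d = p - 1)"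
proof
  have p: "2 \<le> p"
    using prime_ge_2_int[OF assms] .
  assume B: "(r, e, d) \<in> Bset p \<and> p dvd r"
  have "(r, e, d) \<notin> Bminus p"
  proof
    assume "(r, e, d) \<in> Bminus p"
    then have "p - 1 = r * (p - 1 - e)"
      by (simp add: Bminus_def)
    with B have "p dvd p - 1"
      by (metis dvd_mult2)
    then have "p dvd 1"
      using dvd_diff[of p p "p - 1"] by simp
    with p show False
      by simp
  qed
  with B have r: "2 \<le> r" "r \<le> p + 1" and e: "e \<le> p - 1" "r * (p - 1 - e) \<le> p - 1"
    and d: "d = r \<or> d = r - 1"
    by (auto simp: Bset_def Bplus_def Bzero_def)
  with B p have "r = p"
    by (intro eq_if_dvd_less_double) auto
  moreover from this e p have "p - 1 - e = 0"
    by (intro eq_0_if_mult_le_less[of "p - 1 - e" "p - 1" p]) auto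
  ultimately show "r = p \<and> e = p - 1 \<and> (d = p \<or> d = p - 1)"
    using d by simp
next
  assume "r = p \<and> e = p - 1 \<and> (d = p \<or> d = p - 1)"
  with prime_ge_2_int[OF assms] show "(r, e, d) \<in> Bset p \<and> p dvd r"
    by (auto simp: Bset_def Bplus_def Bzero_def)
qed

lemma Bset_above_iff:
  fixes p r e d :: int
  assumes "prime p"
  shows "(r, e, d) \<in> Bset p \<and> p < r \<and> \<not> p dvd r \<longleftrightarrow> r = p + 1 \<and> e = p - 1 \<and> d = p"
proof
  have p: "2 \<le> p"
    using prime_ge_2_int[OF assms] .
  assume B: "(r, e, d) \<in> Bset p \<and> p < r \<and> \<not> p dvd r"
  then have "(r, e, d) \<in> Bzero p \<or> (r, e, d) \<in> Bminus p"
    by (auto simp: Bset_def Bplus_def)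
  then show "r = p + 1 \<and> e = p - 1 \<and> d = p"
  proof
    assume "(r, e, d) \<in> Bzero p"
    then have "r \<le> p + 1" "e \<le> p - 1" "r * (p - 1 - e) \<le> p - 1" "d = r - 1"
      by (auto simp: Bzero_def)
    moreover from this B p have "p - 1 - e = 0"
      by (intro eq_0_if_mult_le_less[of "p - 1 - e" "p - 1" r]) auto
    ultimately show ?thesis
      using B by simp
  next
    assume "(r, e, d) \<in> Bminus p"
    then have "e \<le> p - 1" "r * (p - 1 - e) = p - 1"
      by (auto simp: Bminus_def)
    moreover from this B p have "p - 1 - e = 0"
      by (intro eq_0_if_mult_le_less[of "p - 1 - e" "p - 1" r]) auto
    ultimately show ?thesis
      using p by simp
  qed
next
  assume A: "r = p + 1 \<and> e = p - 1 \<and> d = p"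
  have "\<not> p dvd p + 1"
    using prime_ge_2_int[OF assms] by (simp add: dvd_add_right_iff)
  with A prime_ge_2_int[OF assms] show "(r, e, d) \<in> Bset p \<and> p < r \<and> \<not> p dvd r"
    by (auto simp: Bset_def Bzero_def)
qed

lemma mem_Bset_iff_if_not_dvd:
  fixes p r e d :: int
  assumes "prime p" and "\<not> r dvd p - 1"
  shows "(r, e, d) \<in> Bset p \<longleftrightarrow> (r, e, d) \<in> Uset p \<and> (d = r \<or> d = r - 1)"
proof -
  have "(r, e, d) \<notin> Bminus p"
  proof
    assume "(r, e, d) \<in> Bminus p"
    then have "p - 1 = r * (p - 1 - e)"
      by (simp add: Bminus_def)
    with assms(2) show False
      by (metis dvd_triv_left)
  qed
  then show ?thesis
    unfolding Bset_def using mem_Bplus_iff[OF assms(1)] mem_Bzero_iff[OF assms(1)] by blast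
qed

section \<open>Residues of multiples\<close>

lemma eq_0_if_coprime_dvd_mult:
  fixes r p x :: int
  assumes "coprime r p" and "r dvd x * p" and "\<bar>x\<bar> < r"
  shows "x = 0"
proof (rule ccontr)
  assume "x \<noteq> 0"
  have "r dvd \<bar>x\<bar>"
    using assms(2) coprime_dvd_mult_left_iff[OF assms(1)] by simp
  with \<open>x \<noteq> 0\<close> have "r \<le> \<bar>x\<bar>"
    by (intro zdvd_imp_le) auto
  with assms(3) show False
    by simp
qed

text \<open>The first multiple \<open>(m + 1) q\<close> of \<open>q\<close> beyond \<open>d\<close> is still at most \<open>d + q \<le> 2 d\<close>;
  its residue can only stay below \<open>d\<close> if it has wrapped around \<open>r\<close>.\<close>
lemma diff_le_if_multiples_mod_le:
  fixes q d r :: int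
  assumes q: "2 \<le> q" "q \<le> d" and bounded: "\<And>i. 1 \<le> i \<Longrightarrow> i \<le> d \<Longrightarrow> (i * q) mod r \<le> d"
  shows "r - q \<le> d"
proof -
  define m where "m = d div q"
  have "d = m * q + d mod q" "0 \<le> d mod q" "d mod q < q"
    using q by (simp_all add: m_def)
  moreover have "1 \<le> m"
    using q pos_imp_zdiv_pos_iff[of q d] by (simp add: m_def)
  ultimately have mq: "m * q \<le> d" "d < (m + 1) * q" "1 \<le> m"
    by (simp_all add: algebra_simps)
  have "2 * m \<le> m * q"
    using mq q by (simp add: mult.commute mult_left_mono)
  then have "m + 1 \<le> d"
    using mq by linarith
  show ?thesis
  proof (rule ccontr)
    assume "\<not> r - q \<le> d"
    then have "(m + 1) * q < r"
      using mq by (simp add: algebra_simps)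
    then have "((m + 1) * q) mod r = (m + 1) * q"
      using mq q by (intro mod_pos_pos_trivial) auto
    then show False
      using bounded[of "m + 1"] mq \<open>m + 1 \<le> d\<close> by simp
  qed
qed

text \<open>Otherwise \<open>i \<mapsto> i p mod r\<close> permutes \<open>{1..d}\<close>, and the residue \<open>r - (p mod r)\<close>, which
  lies in \<open>{1..d}\<close> by \<open>diff_le_if_multiples_mod_le\<close>, has a preimage \<open>i\<close> with \<open>r dvd (i + 1) p\<close>.\<close>
lemma exists_multiple_mod_outside:
  fixes r p d :: int
  assumes r: "2 \<le> r" and cop: "coprime r p" and ndvd: "\<not> r dvd p - 1"
    and d: "1 \<le> d" "d \<le> r - 2"
  obtains i where "1 \<le> i" "i \<le> d" "(i * p) mod r \<notin> {1..d}"
proof (rule ccontr)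
  assume "\<not> thesis"
  with that have H: "(i * p) mod r \<in> {1..d}" if "1 \<le> i" "i \<le> d" for i
    using that by blast
  define q where "q = p mod r"
  have q: "1 \<le> q" "q \<le> d" "q < r"
    using H[of 1] d r by (auto simp: q_def)
  have "q \<noteq> 1"
  proof
    assume "q = 1"
    with r have "p mod r = 1 mod r"
      by (simp add: q_def)
    then have "r dvd p - 1"
      by (simp only: mod_eq_dvd_iff)
    with ndvd show False ..
  qed
  have "r - q \<le> d"
    by (rule diff_le_if_multiples_mod_le) (use H q \<open>q \<noteq> 1\<close> in \<open>auto simp: q_def mod_mult_right_eq\<close>)
  define F where "F i = (i * p) mod r" for i
  have "inj_on F {1..d}"
  proof (rule inj_onI)
    fix i i' assume "i \<in> {1..d}" "i' \<in> {1..d}" "F i = F i'"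
    with d have "i - i' = 0"
      by (intro eq_0_if_coprime_dvd_mult[OF cop]) (auto simp: F_def mod_eq_dvd_iff left_diff_distrib)
    then show "i = i'"
      by simp
  qed
  moreover have "F ` {1..d} \<subseteq> {1..d}"
    using H by (auto simp: F_def)
  ultimately have "F ` {1..d} = {1..d}"
    by (intro endo_inj_surj) auto
  moreover have "r - q \<in> {1..d}"
    using \<open>r - q \<le> d\<close> q by simp
  ultimately obtain i where i: "1 \<le> i" "i \<le> d" and "F i = r - q"
    by (metis atLeastAtMost_iff imageE)
  have "((i + 1) * p) mod r = (F i + q) mod r"
    by (simp add: F_def q_def algebra_simps mod_add_eq)
  also have "\<dots> = 0"
    using \<open>F i = r - q\<close> by simp
  finally have "i + 1 = 0"
    using i d by (intro eq_0_if_coprime_dvd_mult[OF cop]) (auto simp: mod_eq_0_iff_dvd)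
  with i show False
    by simp
qed

lemma shifted_multiples_mod_less:
  fixes r p d :: int
  assumes r: "2 \<le> r" and cop: "coprime r p" and d: "d = r \<or> d = r - 1" "1 \<le> d" and i: "i < nat d"
  shows "(d - (int i + 1) * p) mod r < d"
proof (cases "d = r")
  case False
  with d have dr: "d = r - 1"
    by simp
  have "(d - (int i + 1) * p) mod r \<noteq> d mod r"
  proof
    assume "(d - (int i + 1) * p) mod r = d mod r"
    then have "r dvd (d - (int i + 1) * p) - d"
      by (simp only: mod_eq_dvd_iff)
    with i dr have "int i + 1 = 0"
      by (intro eq_0_if_coprime_dvd_mult[OF cop]) auto
    then show False
      by simp
  qed
  moreover have "d mod r = d"
    using dr r by (intro mod_pos_pos_trivial) auto
  moreover have "0 \<le> (d - (int i + 1) * p) mod r" "(d - (int i + 1) * p) mod r < r"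
    using r by simp_all
  ultimately show ?thesis
    using dr by linarith
qed (use r in simp)

lemma shifted_multiples_mod_inj:
  fixes r p d :: int
  assumes "0 < r" and cop: "coprime r p" and "d \<le> r"
  shows "inj_on (\<lambda>i. nat ((d - (int i + 1) * p) mod r)) {0..<nat d}"
proof (rule inj_onI)
  fix i i' assume "i \<in> {0..<nat d}" "i' \<in> {0..<nat d}"
    and "nat ((d - (int i + 1) * p) mod r) = nat ((d - (int i' + 1) * p) mod r)"
  with assms have "int i - int i' = 0"
    by (intro eq_0_if_coprime_dvd_mult[OF cop]) (auto simp: nat_eq_iff2 mod_eq_dvd_iff algebra_simps)
  then show "i = i'"
    by simp
qed

lemma index_le_if_multiples_in_blocks:
  fixes r p :: int and q :: "nat \<Rightarrow> int"
  assumes "0 < r"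
    and blocks: "\<And>n. n < m \<Longrightarrow> int n * p \<le> r * q n \<and> r * q n < (int n + 1) * p"
  shows "n < m \<Longrightarrow> int n \<le> q n"
proof (induction n)
  case 0
  then show ?case
    using blocks[of 0] \<open>0 < r\<close> by (simp add: zero_le_mult_iff)
next
  case (Suc n)
  then have "r * q n < r * q (Suc n)"
    using blocks[of n] blocks[of "Suc n"] by (simp add: add.commute)
  with Suc \<open>0 < r\<close> show ?case
    by simp
qed

section \<open>Nonsingularity of \<open>M\<^sub>d\<close>\<close>

lemma int_CARD_ge_2: "2 \<le> int CARD('p::prime_card)"
  using prime_ge_2_int[OF prime_card_int[where 'a='p]] .

text \<open>With \<open>r = p\<close> and \<open>e = p - 1\<close> the entry \<open>(i, j)\<close> is the coefficient of
  \<open>x ^ (i p + p - d + j)\<close>, which is nonzero exactly when \<open>i + j < d\<close>.\<close>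
lemma det_Mmat_hB_prime_neq_0:
  fixes d :: int
  defines "p \<equiv> int CARD('p::prime_card)"
  assumes d: "0 \<le> d" "d \<le> p"
  shows "det (Mmat (hB (nat p) :: 'p mod_ring poly) (nat (p - 1)) p (nat d)) \<noteq> 0"
proof -
  have p: "2 \<le> p"
    using int_CARD_ge_2 by (simp add: p_def)
  have entry: "Mmat (hB (nat p) :: 'p mod_ring poly) (nat (p - 1)) p (nat d) $$ (i, j) \<noteq> 0 \<longleftrightarrow> i + j < nat d"
    if ij: "i < nat d" "j < nat d" for i j
  proof -
    define k where "k = (int i + 1) * p + int j - int (nat d)"
    have k: "k = p * int i + (p - d + int j)"
      using d by (simp add: k_def algebra_simps)
    have "int j < d"
      using ij by simp
    then have "k div p = int i" "k mod p = p - d + int j" "0 \<le> k"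
      using d p unfolding k by simp_all
    then show ?thesis
      using ij p cpow_hB_neq_0_iff[of "p - 1" p k, where 'p='p]
      by (auto simp: Mmat_index k_def p_def)
  qed
  show ?thesis
  proof (rule det_neq_0_if_antitriangular[OF Mmat_carrier])
    fix i j assume "i < nat d" "j < nat d" "nat d \<le> i + j"
    then show "Mmat (hB (nat p) :: 'p mod_ring poly) (nat (p - 1)) p (nat d) $$ (i, j) = 0"
      using entry[of i j] by auto
  next
    fix i assume "i < nat d"
    then show "Mmat (hB (nat p) :: 'p mod_ring poly) (nat (p - 1)) p (nat d) $$ (i, nat d - 1 - i) \<noteq> 0"
      using entry[of i "nat d - 1 - i"] by auto
  qed
qed

lemma Mmat_hA_index_neq_0_iff:
  fixes r e d :: int
  defines "p \<equiv> int CARD('p::prime_card)"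
  assumes r: "1 \<le> r" and e: "0 \<le> e" "e < p" and d: "0 \<le> d" "d \<le> p" "d * p \<le> r * (e + 1)"
    and ij: "i < nat d" "j < nat d"
  shows "Mmat (hA (nat r) :: 'p mod_ring poly) (nat e) p (nat d) $$ (i, j) \<noteq> 0 \<longleftrightarrow>
    r dvd (int i + 1) * p + int j - d"
proof -
  define k where "k = (int i + 1) * p + int j - d"
  have "(int i + 1) * p \<le> d * p"
    using ij d e by (intro mult_right_mono) auto
  then have "k < r * (e + 1)"
    using ij d by (simp add: k_def)
  then have "r dvd k \<Longrightarrow> k div r \<le> e"
    using r by (auto elim!: dvdE simp: mult_less_cancel_left_pos)
  moreover have "0 \<le> k"
    using ij d e by (simp add: k_def) (smt (verit) mult_le_cancel_right1 of_nat_0_le_iff)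
  ultimately show ?thesis
    using ij d cpow_hA_neq_0_iff[of r e k, where 'p='p, folded p_def] r e
    by (auto simp: Mmat_index k_def)
qed

text \<open>Row \<open>i\<close> has a single nonzero entry, in the column \<open>j \<equiv> d - (i + 1) p (mod r)\<close>; these
  columns are distinct because \<open>p\<close> is invertible modulo \<open>r\<close>.\<close>
lemma det_Mmat_hA_neq_0:
  fixes r e d :: int
  defines "p \<equiv> int CARD('p::prime_card)"
  assumes r: "2 \<le> r" and cop: "coprime r p" and d: "d = r \<or> d = r - 1" "1 \<le> d" "d \<le> p"
    and e: "0 \<le> e" "e < p" and bound: "d * p \<le> r * (e + 1)"
  shows "det (Mmat (hA (nat r) :: 'p mod_ring poly) (nat e) p (nat d)) \<noteq> 0"
proof (rule det_neq_0_if_monomial[OF Mmat_carrier])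
  define s where "s i = nat ((d - (int i + 1) * p) mod r)" for i
  show s_less: "s i < nat d" if "i < nat d" for i
    using shifted_multiples_mod_less[OF r cop d(1,2) that] d by (simp add: s_def)
  show "inj_on s {0..<nat d}"
    unfolding s_def using r d by (intro shifted_multiples_mod_inj[OF _ cop]) auto
  have entry: "Mmat (hA (nat r) :: 'p mod_ring poly) (nat e) p (nat d) $$ (i, j) \<noteq> 0 \<longleftrightarrow> j = s i"
    if ij: "i < nat d" "j < nat d" for i j
  proof -
    have "r dvd (int i + 1) * p + int j - d \<longleftrightarrow> int j mod r = (d - (int i + 1) * p) mod r"
      by (simp only: mod_eq_dvd_iff) (simp add: algebra_simps)
    also have "int j mod r = int j"
      using ij d r by (intro mod_pos_pos_trivial) auto
    also have "int j = (d - (int i + 1) * p) mod r \<longleftrightarrow> j = s i"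
      using r by (auto simp: s_def)
    finally show ?thesis
      using Mmat_hA_index_neq_0_iff[of r e d, where 'p='p, folded p_def] r e d bound ij by simp
  qed
  show "Mmat (hA (nat r) :: 'p mod_ring poly) (nat e) p (nat d) $$ (i, j) = 0"
    if "i < nat d" "j < nat d" "j \<noteq> s i" for i j
    using entry that by blast
  show "Mmat (hA (nat r) :: 'p mod_ring poly) (nat e) p (nat d) $$ (i, s i) \<noteq> 0"
    if "i < nat d" for i
    using entry[OF that s_less[OF that]] by simp
qed

lemma det_Mmat_hA_eq_0:
  fixes r e d :: int
  defines "p \<equiv> int CARD('p::prime_card)"
  assumes r: "2 \<le> r" and cop: "coprime r p" and ndvd: "\<not> r dvd p - 1"
    and d: "1 \<le> d" "d \<le> r - 2" and e: "0 \<le> e" "e < p"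
  shows "det (Mmat (hA (nat r) :: 'p mod_ring poly) (nat e) p (nat d)) = 0"
proof -
  obtain i where i: "1 \<le> i" "i \<le> d" and outside: "(i * p) mod r \<notin> {1..d}"
    using exists_multiple_mod_outside[OF r cop ndvd d] .
  have row: "nat (i - 1) < nat d"
    using i by simp
  show ?thesis
  proof (rule det_eq_0_if_zero_row[OF Mmat_carrier row])
    fix j assume j: "j < nat d"
    define k where "k = (int (nat (i - 1)) + 1) * p + int j - int (nat d)"
    have k: "k = i * p - (d - int j)"
      using i by (simp add: k_def algebra_simps)
    have "\<not> r dvd k"
    proof
      assume "r dvd k"
      then have "(i * p) mod r = (d - int j) mod r"
        unfolding k by (simp only: mod_eq_dvd_iff)
      also have "\<dots> = d - int j"
        using j d by simp
      finally show False
        using outside j by simp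
    qed
    then have "cpow (hA (nat r)) (nat e) k = (0 :: 'p mod_ring)"
      using cpow_hA_neq_0_iff[of r e k, where 'p='p] r e by (auto simp: p_def)
    then show "Mmat (hA (nat r) :: 'p mod_ring poly) (nat e) p (nat d) $$ (nat (i - 1), j) = 0"
      using row j by (simp add: Mmat_index k_def)
  qed
qed

text \<open>For \<open>r \<ge> 2 p\<close> the first two rows only involve coefficients of \<open>x ^ k\<close> with \<open>k < r\<close>,
  i.e. those of \<open>(- x - 1) ^ e\<close>, which vanish for \<open>k > e\<close>. Only \<open>d = 1\<close>, \<open>e = p - 1\<close>
  survives this, and then \<open>g = 2 (p - 1) / r\<close> is not an integer.\<close>
lemma det_Mmat_hB_eq_0_if_large:
  fixes r e d :: int
  defines "p \<equiv> int CARD('p::prime_card)"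
  assumes U: "(r, e, d) \<in> Uset p" and large: "2 * p \<le> r"
  shows "det (Mmat (hB (nat r) :: 'p mod_ring poly) (nat e) p (nat d)) = 0"
proof (rule ccontr)
  assume det: "det (Mmat (hB (nat r) :: 'p mod_ring poly) (nat e) p (nat d)) \<noteq> 0"
  have p: "2 \<le> p"
    using int_CARD_ge_2 by (simp add: p_def)
  from U obtain g where d: "1 \<le> d" "d \<le> p" and e: "1 \<le> e"
    and g: "2 * r * e * d - d * (d + 1) * (p - 1) = g * (r * (r - 1))" "0 < g"
    by (auto simp: mem_Uset_iff)
  have "e \<le> p - 1"
    using Uset_bounds(1)[OF U p] .
  then have nonzero: "0 \<le> k \<and> k div r + k mod r \<le> e"
    if "cpow (hB (nat r)) (nat e) k \<noteq> (0 :: 'p mod_ring)" for k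
    using that cpow_hB_neq_0_iff[of e r k, where 'p='p] e large by (simp add: p_def)
  show False
  proof (cases "d = 1")
    case True
    obtain j where "j < nat d" "cpow (hB (nat r)) (nat e) ((int 0 + 1) * p + int j - int (nat d)) \<noteq> (0 :: 'p mod_ring)"
      by (rule det_Mmat_neq_0_imp_row[OF det, where i = 0]) (use d in auto)
    with True have "(p - 1) div r + (p - 1) mod r \<le> e"
      using nonzero by fastforce
    with large p \<open>e \<le> p - 1\<close> have "e = p - 1"
      by simp
    with g True have "(r - 1) * (g * r) = (r - 1) * (2 * (p - 1))"
      by (simp add: algebra_simps)
    with large p have "g * r = 2 * (p - 1)"
      by simp
    moreover have "r \<le> g * r"
      using g large p by simp
    ultimately show False
      using large by simp
  next
    case False
    obtain j where j: "j < nat d" and "cpow (hB (nat r)) (nat e) ((int 1 + 1) * p + int j - int (nat d)) \<noteq> (0 :: 'p mod_ring)"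
      by (rule det_Mmat_neq_0_imp_row[OF det, where i = 1]) (use d False in auto)
    then have "(2 * p + int j - d) div r + (2 * p + int j - d) mod r \<le> e"
      using nonzero d by fastforce
    moreover have "0 \<le> 2 * p + int j - d" "2 * p + int j - d < r"
      using j d large by auto
    ultimately show False
      using d \<open>e \<le> p - 1\<close> by simp
  qed
qed

text \<open>The last row forces \<open>e = p - 1\<close>; then \<open>g = d (2 p - d - 1) / p\<close> is an integer
  only for \<open>d \<ge> p - 1\<close>.\<close>
lemma det_Mmat_hB_prime_neq_0_imp:
  fixes e d :: int
  defines "p \<equiv> int CARD('p::prime_card)"
  assumes U: "(p, e, d) \<in> Uset p" and det: "det (Mmat (hB (nat p) :: 'p mod_ring poly) (nat e) p (nat d)) \<noteq> 0"
  shows "e = p - 1" and "p - 1 \<le> d"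
proof -
  have p: "prime p" "2 \<le> p"
    using prime_card_int int_CARD_ge_2 by (simp_all add: p_def)
  from U obtain g where d: "1 \<le> d" "d \<le> p" and e: "1 \<le> e"
    and g: "2 * p * e * d - d * (d + 1) * (p - 1) = g * (p * (p - 1))"
    by (auto simp: mem_Uset_iff)
  have "e \<le> p - 1"
    using Uset_bounds(1)[OF U p(2)] .
  obtain j where "j < nat d"
    and "cpow (hB (nat p)) (nat e) ((int (nat d - 1) + 1) * p + int j - int (nat d)) \<noteq> (0 :: 'p mod_ring)"
    by (rule det_Mmat_neq_0_imp_row[OF det, where i = "nat d - 1"]) (use d in auto)
  moreover define k where "k = (int (nat d - 1) + 1) * p + int j - int (nat d)"
  ultimately have "k div p + k mod p \<le> e" and j: "int j < d"
    using cpow_hB_neq_0_iff[of e p k, where 'p='p] e \<open>e \<le> p - 1\<close> d by (auto simp: p_def)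
  moreover have "k = p * (d - 1) + (p - d + int j)"
    using d by (simp add: k_def algebra_simps)
  then have "k div p = d - 1" "k mod p = p - d + int j"
    using j d p by simp_all
  ultimately show e_eq: "e = p - 1"
    using \<open>e \<le> p - 1\<close> by simp
  have "(p - 1) * (d * (2 * p - d - 1)) = (p - 1) * (g * p)"
    using g unfolding e_eq by (simp add: algebra_simps)
  then have "p dvd d * (2 * p - d - 1)"
    using p by simp
  then have "p dvd d \<or> p dvd 2 * p - d - 1"
    by (rule prime_dvd_multD[OF p(1)])
  moreover have "p dvd d + 1" if "p dvd 2 * p - d - 1"
  proof -
    have "p dvd 2 * p - (2 * p - d - 1)"
      using dvd_diff[of p "2 * p" "2 * p - d - 1"] that by simp
    then show ?thesis
      by simp
  qed
  ultimately have "p dvd d \<or> p dvd d + 1"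
    by blast
  then show "p - 1 \<le> d"
    using d zdvd_imp_le[of p d] zdvd_imp_le[of p "d + 1"] by auto
qed

lemma det_Mmat_hA_above_neq_0_imp_dim:
  fixes r e d :: int
  defines "p \<equiv> int CARD('p::prime_card)"
  assumes above: "p < r" and d: "1 \<le> d" "d \<le> p" and e: "0 \<le> e" "e < p"
    and det: "det (Mmat (hA (nat r) :: 'p mod_ring poly) (nat e) p (nat d)) \<noteq> 0"
  shows "d = p"
proof -
  have p: "2 \<le> p"
    using int_CARD_ge_2 by (simp add: p_def)
  obtain j where j: "j < nat d"
    and "cpow (hA (nat r)) (nat e) ((int 0 + 1) * p + int j - int (nat d)) \<noteq> (0 :: 'p mod_ring)"
    by (rule det_Mmat_neq_0_imp_row[OF det, where i = 0]) (use d in auto)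
  with above d e p have k: "0 \<le> p + int j - d" "r dvd p + int j - d"
    using cpow_hA_neq_0_iff[of r e "p + int j - d", where 'p='p, folded p_def] by auto
  have "p + int j - d = 0"
  proof (rule ccontr)
    assume "p + int j - d \<noteq> 0"
    then have "r \<le> p + int j - d"
      using k by (intro zdvd_imp_le) auto
    with j d above show False
      by simp
  qed
  with j d show "d = p"
    by simp
qed

text \<open>Row \<open>n\<close> has a nonzero entry at a multiple \<open>r q n\<close> in \<open>[n p, (n + 1) p)\<close>. The \<open>q n\<close>
  increase strictly and are at most \<open>e < p\<close>, so \<open>q (p - 1) = p - 1 = e\<close>, and then \<open>r \<le> p + 1\<close>.\<close>
lemma det_Mmat_hA_above_neq_0_imp_r_e:
  fixes r e :: int
  defines "p \<equiv> int CARD('p::prime_card)"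
  assumes above: "p < r" and e: "0 \<le> e" "e < p"
    and det: "det (Mmat (hA (nat r) :: 'p mod_ring poly) (nat e) p (nat p)) \<noteq> 0"
  shows "r = p + 1 \<and> e = p - 1"
proof -
  have p: "2 \<le> p"
    using int_CARD_ge_2 by (simp add: p_def)
  have "\<exists>q. int n * p \<le> r * q \<and> r * q < (int n + 1) * p \<and> q \<le> e" if n: "n < nat p" for n
  proof -
    obtain j where j: "j < nat p"
      and "cpow (hA (nat r)) (nat e) ((int n + 1) * p + int j - int (nat p)) \<noteq> (0 :: 'p mod_ring)"
      by (rule det_Mmat_neq_0_imp_row[OF det, where i = n]) (use n in auto)
    with above e p have k: "r dvd int n * p + int j" "(int n * p + int j) div r \<le> e"
      using cpow_hA_neq_0_iff[of r e "int n * p + int j", where 'p='p, folded p_def]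
      by (auto simp: algebra_simps)
    then obtain q where "int n * p + int j = r * q"
      by (elim dvdE)
    with k j above show ?thesis
      by (intro exI[of _ q]) (auto simp: algebra_simps)
  qed
  then obtain q where q: "\<And>n. n < nat p \<Longrightarrow> int n * p \<le> r * q n \<and> r * q n < (int n + 1) * p \<and> q n \<le> e"
    by metis
  have "int (nat p - 1) \<le> q (nat p - 1)"
    using index_le_if_multiples_in_blocks[of r "nat p" p q "nat p - 1"] q above p by simp
  moreover have "r * q (nat p - 1) < p * p" "q (nat p - 1) \<le> e"
    using q[of "nat p - 1"] p by auto
  ultimately have "q (nat p - 1) = p - 1" "e = p - 1"
    using e p by (simp_all add: of_nat_diff)
  with \<open>r * q (nat p - 1) < p * p\<close> have "r * (p - 1) < p * p"
    by simp
  have "r \<le> p + 1"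
  proof (rule ccontr)
    assume "\<not> r \<le> p + 1"
    then have "(p + 2) * (p - 1) \<le> r * (p - 1)"
      using p by (intro mult_right_mono) auto
    with \<open>r * (p - 1) < p * p\<close> p show False
      by (simp add: algebra_simps)
  qed
  with above \<open>e = p - 1\<close> show ?thesis
    by simp
qed

lemma det_Mmat_hA_below_neq_0_iff:
  fixes r e d :: int
  defines "p \<equiv> int CARD('p::prime_card)"
  assumes U: "(r, e, d) \<in> Uset p" and r: "r \<le> p - 1" and ndvd: "\<not> r dvd p - 1"
  shows "det (Mmat (hA (nat r) :: 'p mod_ring poly) (nat e) p (nat d)) \<noteq> 0 \<longleftrightarrow> d = r \<or> d = r - 1"
proof -
  have p: "prime p" "2 \<le> p"
    using prime_card_int int_CARD_ge_2 by (simp_all add: p_def)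
  from U have facts: "2 \<le> r" "1 \<le> d" "d \<le> p" "1 \<le> e"
    by (auto simp: mem_Uset_iff)
  have bounds: "e \<le> p - 1" "d \<le> r" "d * p \<le> r * (e + 1)"
    using Uset_bounds[OF U p(2)] by simp_all
  have "\<not> p dvd r"
    using r facts zdvd_imp_le[of p r] by auto
  then have "coprime p r"
    by (rule prime_imp_coprime[OF p(1)])
  then have cop: "coprime r p"
    by (simp add: coprime_commute)
  show ?thesis
  proof
    assume "det (Mmat (hA (nat r) :: 'p mod_ring poly) (nat e) p (nat d)) \<noteq> 0"
    then have "\<not> d \<le> r - 2"
      using det_Mmat_hA_eq_0[where 'p='p and r=r and e=e and d=d, folded p_def] facts bounds cop ndvd
      by auto
    with bounds show "d = r \<or> d = r - 1"
      by auto
  next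
    assume "d = r \<or> d = r - 1"
    with facts bounds cop show "det (Mmat (hA (nat r) :: 'p mod_ring poly) (nat e) p (nat d)) \<noteq> 0"
      by (intro det_Mmat_hA_neq_0[where 'p='p, folded p_def]) auto
  qed
qed

lemma nonsingular_hB_iff_Bset_dvd:
  fixes r e d :: int
  defines "p \<equiv> int CARD('p::prime_card)"
  shows "(r, e, d) \<in> Uset p \<and> p dvd r \<and> det (Mmat (hB (nat r) :: 'p mod_ring poly) (nat e) p (nat d)) \<noteq> 0
    \<longleftrightarrow> (r, e, d) \<in> Bset p \<and> p dvd r"
proof -
  have p: "prime p" "2 \<le> p"
    using prime_card_int int_CARD_ge_2 by (simp_all add: p_def)
  have "(r, e, d) \<in> Uset p \<and> p dvd r \<and> det (Mmat (hB (nat r) :: 'p mod_ring poly) (nat e) p (nat d)) \<noteq> 0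
      \<longleftrightarrow> r = p \<and> e = p - 1 \<and> (d = p \<or> d = p - 1)"
  proof
    assume A: "(r, e, d) \<in> Uset p \<and> p dvd r \<and> det (Mmat (hB (nat r) :: 'p mod_ring poly) (nat e) p (nat d)) \<noteq> 0"
    then have "2 \<le> r" "d \<le> p"
      by (auto simp: mem_Uset_iff)
    moreover have "r < 2 * p"
    proof (rule ccontr)
      assume "\<not> r < 2 * p"
      with A have "det (Mmat (hB (nat r) :: 'p mod_ring poly) (nat e) p (nat d)) = 0"
        by (intro det_Mmat_hB_eq_0_if_large[where 'p='p, folded p_def]) auto
      with A show False
        by simp
    qed
    ultimately have "r = p"
      using A eq_if_dvd_less_double by simp
    with A \<open>d \<le> p\<close> show "r = p \<and> e = p - 1 \<and> (d = p \<or> d = p - 1)"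
      using det_Mmat_hB_prime_neq_0_imp[of e d, where 'p='p] by (auto simp: p_def)
  next
    assume A: "r = p \<and> e = p - 1 \<and> (d = p \<or> d = p - 1)"
    then have "(r, e, d) \<in> Bplus p \<or> (r, e, d) \<in> Bzero p"
      using p by (auto simp: Bplus_def Bzero_def)
    then have "(r, e, d) \<in> Uset p"
      using mem_Bplus_iff[OF p(1)] mem_Bzero_iff[OF p(1)] by blast
    moreover have "det (Mmat (hB (nat r) :: 'p mod_ring poly) (nat e) p (nat d)) \<noteq> 0"
      using A p det_Mmat_hB_prime_neq_0[of d, where 'p='p] by (auto simp: p_def)
    ultimately show "(r, e, d) \<in> Uset p \<and> p dvd r \<and> det (Mmat (hB (nat r) :: 'p mod_ring poly) (nat e) p (nat d)) \<noteq> 0"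
      using A by simp
  qed
  then show ?thesis
    using Bset_dvd_iff[OF p(1)] by blast
qed

lemma nonsingular_hA_iff_Bset_above:
  fixes r e d :: int
  defines "p \<equiv> int CARD('p::prime_card)"
  shows "(r, e, d) \<in> Uset p \<and> p < r \<and> \<not> p dvd r \<and> det (Mmat (hA (nat r) :: 'p mod_ring poly) (nat e) p (nat d)) \<noteq> 0
    \<longleftrightarrow> (r, e, d) \<in> Bset p \<and> p < r \<and> \<not> p dvd r"
proof -
  have p: "prime p" "2 \<le> p"
    using prime_card_int int_CARD_ge_2 by (simp_all add: p_def)
  have "(r, e, d) \<in> Uset p \<and> p < r \<and> det (Mmat (hA (nat r) :: 'p mod_ring poly) (nat e) p (nat d)) \<noteq> 0
      \<longleftrightarrow> r = p + 1 \<and> e = p - 1 \<and> d = p"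
  proof
    assume A: "(r, e, d) \<in> Uset p \<and> p < r \<and> det (Mmat (hA (nat r) :: 'p mod_ring poly) (nat e) p (nat d)) \<noteq> 0"
    then have "1 \<le> d" "d \<le> p" "0 \<le> e" "e < p"
      using Uset_bounds(1)[of r e d p] p by (auto simp: mem_Uset_iff)
    with A have "d = p"
      using det_Mmat_hA_above_neq_0_imp_dim[of r d e, where 'p='p, folded p_def] by blast
    with A \<open>0 \<le> e\<close> \<open>e < p\<close> show "r = p + 1 \<and> e = p - 1 \<and> d = p"
      using det_Mmat_hA_above_neq_0_imp_r_e[of r e, where 'p='p, folded p_def] by blast
  next
    assume A: "r = p + 1 \<and> e = p - 1 \<and> d = p"
    then have "(r, e, d) \<in> Bzero p"
      using p by (auto simp: Bzero_def)
    then have "(r, e, d) \<in> Uset p"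
      using mem_Bzero_iff[OF p(1)] by blast
    moreover have "det (Mmat (hA (nat r) :: 'p mod_ring poly) (nat e) p (nat d)) \<noteq> 0"
    proof -
      have "p * p \<le> (p + 1) * (p - 1 + 1)"
        using p by (simp add: algebra_simps)
      then have "det (Mmat (hA (nat (p + 1)) :: 'p mod_ring poly) (nat (p - 1)) p (nat p)) \<noteq> 0"
        by (intro det_Mmat_hA_neq_0[where 'p='p, folded p_def]) (use p in auto)
      with A show ?thesis
        by simp
    qed
    ultimately show "(r, e, d) \<in> Uset p \<and> p < r \<and> det (Mmat (hA (nat r) :: 'p mod_ring poly) (nat e) p (nat d)) \<noteq> 0"
      using A by simp
  qed
  moreover have "\<not> p dvd p + 1"
    using p by (simp add: dvd_add_right_iff)
  ultimately show ?thesis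
    using Bset_above_iff[OF p(1)] by blast
qed

lemma nonsingular_hA_iff_Bset_below:
  fixes r e d :: int
  defines "p \<equiv> int CARD('p::prime_card)"
  shows "(r, e, d) \<in> Uset p \<and> 2 \<le> r \<and> r \<le> p - 1 \<and> \<not> r dvd (p - 1) \<and>
      det (Mmat (hA (nat r) :: 'p mod_ring poly) (nat e) p (nat d)) \<noteq> 0
    \<longleftrightarrow> (r, e, d) \<in> Bset p \<and> 2 \<le> r \<and> r \<le> p - 1 \<and> \<not> r dvd (p - 1)"
proof -
  have "(r, e, d) \<in> Uset p \<and> det (Mmat (hA (nat r) :: 'p mod_ring poly) (nat e) p (nat d)) \<noteq> 0
      \<longleftrightarrow> (r, e, d) \<in> Bset p" if "r \<le> p - 1" "\<not> r dvd (p - 1)"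
    using det_Mmat_hA_below_neq_0_iff[of r e d, where 'p='p, folded p_def]
      mem_Bset_iff_if_not_dvd[OF prime_card_int[where 'a='p, folded p_def] that(2)] that
    by blast
  then show ?thesis
    by blast
qed

theorem lemma6:
  fixes ty :: "'p::prime_card itself"
  defines "p \<equiv> int CARD('p)"
  shows
   "{(r,e,d) \<in> Uset p. p dvd r \<and>
        det (Mmat (hB (nat r) :: 'p mod_ring poly) (nat e) p (nat d)) \<noteq> 0}
      = {(r,e,d) \<in> Bset p. p dvd r}
  \<and> {(r,e,d) \<in> Uset p. p < r \<and> \<not> p dvd r \<and>
        det (Mmat (hA (nat r) :: 'p mod_ring poly) (nat e) p (nat d)) \<noteq> 0}
      = {(r,e,d) \<in> Bset p. p < r \<and> \<not> p dvd r}
  \<and> {(r,e,d) \<in> Uset p. 2 \<le> r \<and> r \<le> p - 1 \<and> \<not> r dvd (p - 1) \<and>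
        det (Mmat (hA (nat r) :: 'p mod_ring poly) (nat e) p (nat d)) \<noteq> 0}
      = {(r,e,d) \<in> Bset p. 2 \<le> r \<and> r \<le> p - 1 \<and> \<not> r dvd (p - 1)}"
  unfolding p_def set_eq_iff split_paired_all
  using nonsingular_hB_iff_Bset_dvd[where 'p='p] nonsingular_hA_iff_Bset_above[where 'p='p]
    nonsingular_hA_iff_Bset_below[where 'p='p]
  by simp

end
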